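(* Let $G\in\mathrm{C}^1(\mathbb{R})$ be coercive and let $V\in\mathrm{Lip}(\mathbb{R})$ be $1$-periodic. For each $\theta\in\mathbb{R}$ there exist a unique $\overline{H}(\theta)\in\mathbb{R}$ and a unique $1$-periodic $f_\theta\in\mathrm{C}^1(\mathbb{R})$ such that $\int_0^1 f_\theta(x)\,dx=\theta$ and $$f_\theta'(x)+G(f_\theta(x))+V(x)=\overline{H}(\theta)\quad\text{for all }x\in\mathbb{R}.$$
   Context: $G$ coercive means $G(p)\to\infty$ as $p\to\pm\infty$. *)

theory Defs
  imports "HOL-Analysis.Analysis"
begin

definition C1 :: "(real \<Rightarrow> real) \<Rightarrow> bool" where
  "C1 f \<longleftrightarrow> f differentiable_on UNIV \<and> continuous_on UNIV (deriv f)"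

definition coercive :: "(real \<Rightarrow> real) \<Rightarrow> bool" where
  "coercive G \<longleftrightarrow> filterlim G at_top at_top \<and> filterlim G at_top at_bot"

definition periodic1 :: "(real \<Rightarrow> real) \<Rightarrow> bool" where
  "periodic1 f \<longleftrightarrow> (\<forall>x. f (x + 1) = f x)"

definition Lip :: "(real \<Rightarrow> real) \<Rightarrow> bool" where
  "Lip V \<longleftrightarrow> (\<exists>L. L-lipschitz_on UNIV V)"

end

theory Submission
  imports Defs
begin

(*
  Two solutions with the same mean cross. Where f2 - f1 vanishes its derivative is
  H2 - H1, so for H2 > H1 the periodic function f2 - f1 could only cross zero upwards, which is
  impossible; hence H1 = H2. Then w = f2 - f1 satisfies |w'| <= L |w|, L a Lipschitz constant of G
  on the range of the solutions, and w vanishes identically by Gronwall's argument.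

  Truncate G outside a large interval [-R, R] to a globally Lipschitz, bounded K and
  solve y' = H - V(t) - K(y), y(0) = a, by Picard iteration. y(1) is continuous and strictly
  increasing in H, so there is a unique H(a) with y(1) = a, depending continuously on a, and then
  y is 1-periodic. On a periodic solution K(y) stays within 2 sup|V| of H, by the same crossing
  argument applied to y - y(x). Coercivity of G then forces the mean of y below theta for a very
  negative a and above theta for a very positive a; the intermediate value theorem gives an a with
  mean theta, and the oscillation bound keeps that solution inside (-R, R), where K = G.
*)

lemma C1_has_real_derivative: "C1 f \<Longrightarrow> (f has_real_derivative deriv f x) (at x)"
  unfolding C1_def differentiable_on_def by (simp add: DERIV_deriv_iff_real_differentiable)

lemma C1_continuous_on: "C1 f \<Longrightarrow> continuous_on S f"
  by (meson C1_has_real_derivative DERIV_isCont continuous_at_imp_continuous_on)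

lemma C1_if_has_real_derivative:
  assumes "\<And>x. (f has_real_derivative f' x) (at x)" and "continuous_on UNIV f'"
  shows "C1 f"
proof -
  have "deriv f = f'" using assms(1) by (intro ext DERIV_imp_deriv)
  then show ?thesis
    using assms unfolding C1_def differentiable_on_def real_differentiable_def by auto
qed

lemma C1_lipschitz_on_Icc:
  assumes "C1 G"
  obtains L where "L-lipschitz_on {a..b} G"
proof -
  have "continuous_on {a..b} (deriv G)"
    using assms unfolding C1_def by (meson continuous_on_subset subset_UNIV)
  then have "bounded (deriv G ` {a..b})"
    by (intro compact_imp_bounded compact_continuous_image compact_Icc)
  then obtain L where L: "\<And>x. x \<in> {a..b} \<Longrightarrow> norm (deriv G x) \<le> L"
    unfolding bounded_iff by blast
  have ordered: "dist (G x) (G y) \<le> L * dist x y" if "x \<in> {a..b}" "y \<in> {a..b}" "x < y" for x y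
  proof -
    obtain z where z: "x < z" "z < y" "G y - G x = (y - x) * deriv G z"
      using MVT2[OF \<open>x < y\<close>, of G "deriv G"] C1_has_real_derivative[OF assms] by blast
    have "dist (G x) (G y) = (y - x) * \<bar>deriv G z\<bar>"
      using z(3) \<open>x < y\<close> by (simp add: dist_real_def abs_minus_commute[of "G x"] abs_mult)
    also have "\<dots> \<le> (y - x) * L"
      using L[of z] that z \<open>x < y\<close> by (intro mult_left_mono) auto
    finally show ?thesis using \<open>x < y\<close> by (simp add: dist_real_def mult.commute)
  qed
  have "dist (G x) (G y) \<le> L * dist x y" if "x \<in> {a..b}" "y \<in> {a..b}" for x y
    using ordered[OF that] ordered[OF that(2,1)]
    by (cases x y rule: linorder_cases) (auto simp: dist_commute)
  moreover have "0 \<le> L" if "a \<le> b" using L[of a] that by auto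
  ultimately have "L-lipschitz_on {a..b} G" if "a \<le> b" using that by (intro lipschitz_onI)
  moreover have "0-lipschitz_on {a..b} G" if "\<not> a \<le> b" using that by simp
  ultimately show thesis using that by blast
qed

lemma C1_clamp_lipschitz_bounded:
  assumes "C1 G" and "0 \<le> R"
  obtains L B where "0 < L" and "L-lipschitz_on UNIV (\<lambda>p. G (max (- R) (min R p)))"
    and "\<And>p. \<bar>G (max (- R) (min R p))\<bar> \<le> B"
proof -
  define clamp where "clamp p = max (- R) (min R p)" for p :: real
  have range: "clamp p \<in> {-R..R}" for p using \<open>0 \<le> R\<close> by (simp add: clamp_def)
  obtain LG where LG: "LG-lipschitz_on {-R..R} G" using C1_lipschitz_on_Icc[OF assms(1)] .
  have "1-lipschitz_on UNIV clamp"
    by (rule lipschitz_onI) (auto simp: clamp_def dist_real_def abs_if)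
  moreover have "LG-lipschitz_on (range clamp) G"
    using LG by (rule lipschitz_on_subset) (use range in auto)
  ultimately have "(LG * 1)-lipschitz_on UNIV (\<lambda>p. G (clamp p))" by (rule lipschitz_on_compose2)
  then have "(LG + 1)-lipschitz_on UNIV (\<lambda>p. G (clamp p))" by (rule lipschitz_on_mono) auto
  moreover have "0 < LG + 1" using lipschitz_on_nonneg[OF LG] by simp
  moreover obtain B where "\<And>p. p \<in> {-R..R} \<Longrightarrow> \<bar>G p\<bar> \<le> B"
    using compact_imp_bounded[OF compact_continuous_image[OF C1_continuous_on[OF assms(1)] compact_Icc]]
    unfolding bounded_iff by (metis image_eqI real_norm_def)
  ultimately show thesis using that range unfolding clamp_def by blast
qed

lemma coercive_gt_outside:
  assumes "coercive G"
  obtains R where "\<And>p. R \<le> \<bar>p\<bar> \<Longrightarrow> c < G p"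
proof -
  have "\<forall>\<^sub>F p in at_top. c + 1 \<le> G p" "\<forall>\<^sub>F p in at_bot. c + 1 \<le> G p"
    using assms unfolding coercive_def filterlim_at_top by blast+
  then obtain N1 N2 where N1: "\<And>p. N1 \<le> p \<Longrightarrow> c + 1 \<le> G p"
    and N2: "\<And>p. p \<le> N2 \<Longrightarrow> c + 1 \<le> G p"
    unfolding eventually_at_top_linorder eventually_at_bot_linorder by blast
  have "c < G p" if "max N1 (- N2) \<le> \<bar>p\<bar>" for p
  proof (cases "0 \<le> p")
    case True
    then have "N1 \<le> p" using that by simp
    then show ?thesis using N1 by force
  next
    case False
    then have "p \<le> N2" using that by simp
    then show ?thesis using N2 by force
  qed
  then show thesis by (rule that)
qed

lemma periodic1_add_of_nat:
  assumes "periodic1 f" shows "f (x + of_nat n) = f x"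
proof (induction n)
  case (Suc n)
  have "f (x + of_nat (Suc n)) = f ((x + of_nat n) + 1)" by (simp add: add_ac)
  also have "\<dots> = f x" using Suc assms unfolding periodic1_def by simp
  finally show ?case .
qed simp

lemma periodic1_add_of_int:
  assumes "periodic1 f" shows "f (x + of_int k) = f x"
proof (cases "0 \<le> k")
  case True
  then show ?thesis using periodic1_add_of_nat[OF assms, of x "nat k"] by simp
next
  case False
  then show ?thesis using periodic1_add_of_nat[OF assms, of "x + of_int k" "nat (- k)"] by simp
qed

lemma periodic1_frac: "periodic1 f \<Longrightarrow> f (frac x) = f x"
  using periodic1_add_of_int[of f "frac x" "\<lfloor>x\<rfloor>"] by (simp add: frac_def)

lemma periodic1_bounded:
  assumes "continuous_on UNIV f" and "periodic1 f"
  obtains B where "\<And>x. \<bar>f x\<bar> \<le> B"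
proof -
  have "f x \<in> f ` {0..1}" for x
    using periodic1_frac[OF assms(2), of x] frac_ge_0[of x] frac_lt_1[of x]
    by (metis atLeastAtMost_iff image_eqI less_imp_le)
  moreover have "bounded (f ` {0..1})"
    by (meson assms(1) compact_Icc compact_continuous_image compact_imp_bounded
        continuous_on_subset subset_UNIV)
  ultimately show thesis using that unfolding bounded_iff by (metis real_norm_def)
qed

lemma mult_exp_neg_le:
  fixes c x :: real
  assumes "0 < c"
  shows "x * exp (- (c * x)) \<le> 1 / c"
proof -
  have "c * x \<le> exp (c * x)" using exp_ge_add_one_self[of "c * x"] by linarith
  then have "x \<le> exp (c * x) / c" using assms by (simp add: field_simps)
  then have "x * exp (- (c * x)) \<le> exp (c * x) / c * exp (- (c * x))"
    by (rule mult_right_mono) simp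
  also have "\<dots> = 1 / c" by (simp add: exp_minus field_simps)
  finally show ?thesis .
qed

lemma integral_exp_mult:
  fixes c t :: real
  assumes "0 < c" and "0 \<le> t"
  shows "integral {0..t} (\<lambda>s. exp (c * s)) = (exp (c * t) - 1) / c"
proof -
  have "((\<lambda>s. exp (c * s)) has_integral (exp (c * t) / c - exp (c * 0) / c)) {0..t}"
  proof (rule fundamental_theorem_of_calculus[OF \<open>0 \<le> t\<close>])
    fix x
    have "((\<lambda>s. exp (c * s) / c) has_real_derivative exp (c * x)) (at x within {0..t})"
      using \<open>0 < c\<close> by (auto intro!: derivative_eq_intros)
    then show "((\<lambda>s. exp (c * s) / c) has_vector_derivative exp (c * x)) (at x within {0..t})"
      by (simp add: has_real_derivative_iff_has_vector_derivative)
  qed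
  then show ?thesis by (simp add: integral_unique diff_divide_distrib)
qed

lemma integral_mean_value:
  fixes w :: "real \<Rightarrow> real"
  assumes cont: "continuous_on {a..b} w" and "a < b"
  obtains z where "z \<in> {a..b}" "integral {a..b} w = (b - a) * w z"
proof -
  have "{a..b} \<noteq> {}" using \<open>a < b\<close> by simp
  then obtain m M where m: "m \<in> {a..b}" "\<And>x. x \<in> {a..b} \<Longrightarrow> w m \<le> w x"
    and M: "M \<in> {a..b}" "\<And>x. x \<in> {a..b} \<Longrightarrow> w x \<le> w M"
    using continuous_attains_inf[OF compact_Icc _ cont] continuous_attains_sup[OF compact_Icc _ cont]
    by meson
  have int: "w integrable_on {a..b}" using cont by (rule integrable_continuous_interval)
  have "(b - a) * w m \<le> integral {a..b} w" "integral {a..b} w \<le> (b - a) * w M"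
    using integral_le[OF integrable_const_ivl int, of "w m"] integral_le[OF int integrable_const_ivl, of "w M"]
      m M \<open>a < b\<close> by (auto simp: mult.commute)
  then have "integral {a..b} w / (b - a) \<in> {w m..w M}"
    using \<open>a < b\<close> by (auto simp: field_simps)
  also have "\<dots> \<subseteq> w ` {a..b}"
    using m M by (intro connected_contains_Icc connected_continuous_image cont) auto
  finally show thesis using that \<open>a < b\<close> by (auto simp: field_simps)
qed

lemma integral_lipschitz_on:
  fixes h :: "real \<Rightarrow> real"
  assumes cont: "continuous_on UNIV h" and bound: "\<And>s. \<bar>h s\<bar> \<le> C"
  shows "C-lipschitz_on UNIV (\<lambda>t. integral {0..t} h)"
proof -
  have "0 \<le> C" using bound[of 0] by linarith
  have int: "h integrable_on {a..b}" for a b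
    using cont by (meson continuous_on_subset integrable_continuous_interval subset_UNIV)
  have ordered: "\<bar>integral {0..t} h - integral {0..t'} h\<bar> \<le> C * (t - t')" if "0 \<le> t'" "t' \<le> t" for t t'
  proof -
    have "integral {0..t'} h + integral {t'..t} h = integral {0..t} h"
      by (rule Henstock_Kurzweil_Integration.integral_combine) (use that int in auto)
    moreover have "norm (integral {t'..t} h) \<le> integral {t'..t} (\<lambda>_. C)"
      using bound by (intro integral_norm_bound_integral int integrable_const_ivl) auto
    ultimately show ?thesis using that by (simp add: mult.commute)
  qed
  \<comment> \<open>the integral over \<open>{0..t}\<close> vanishes for \<open>t < 0\<close>\<close>
  have clamp: "integral {0..t} h = integral {0..max 0 t} h" for t
    by (cases "0 \<le> t") auto
  have nonneg: "\<bar>integral {0..p} h - integral {0..q} h\<bar> \<le> C * \<bar>p - q\<bar>" if "0 \<le> p" "0 \<le> q" for p q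
  proof (cases "q \<le> p")
    case True
    then show ?thesis using ordered[of q p] that by simp
  next
    case False
    then show ?thesis using ordered[of p q] that by (simp add: abs_minus_commute)
  qed
  show ?thesis
  proof (rule lipschitz_onI)
    fix x y :: real
    have "\<bar>integral {0..max 0 x} h - integral {0..max 0 y} h\<bar> \<le> C * \<bar>max 0 x - max 0 y\<bar>"
      by (rule nonneg) auto
    also have "\<dots> \<le> C * \<bar>x - y\<bar>" using \<open>0 \<le> C\<close> by (intro mult_left_mono) auto
    finally show "dist (integral {0..x} h) (integral {0..y} h) \<le> C * dist x y"
      by (simp add: dist_real_def clamp[of x] clamp[of y])
  qed fact
qed

lemma continuous_root_of_strict_mono:
  fixes F :: "real \<Rightarrow> real \<Rightarrow> real" and h :: "real \<Rightarrow> real"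
  assumes mono: "\<And>a. strict_mono (\<lambda>H. F H a)" and cont: "\<And>H. continuous_on UNIV (F H)"
    and root: "\<And>a. F (h a) a = 0"
  shows "continuous_on UNIV h"
proof -
  have "(h \<longlongrightarrow> h a) (at a)" for a
  proof (rule order_tendstoI)
    have F_tendsto: "(F y \<longlongrightarrow> F y a) (at a)" for y
      using cont by (simp add: continuous_on_def)
    fix y assume "y < h a"
    then have "F y a < 0" using strict_monoD[OF mono] root by metis
    then have "\<forall>\<^sub>F a' in at a. F y a' < F (h a') a'"
      using order_tendstoD(2)[OF F_tendsto] root by simp
    then show "\<forall>\<^sub>F a' in at a. y < h a'"
      by (rule eventually_mono) (use mono strict_mono_less in blast)
  next
    have F_tendsto: "(F y \<longlongrightarrow> F y a) (at a)" for y
      using cont by (simp add: continuous_on_def)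
    fix y assume "h a < y"
    then have "0 < F y a" using strict_monoD[OF mono] root by metis
    then have "\<forall>\<^sub>F a' in at a. F (h a') a' < F y a'"
      using order_tendstoD(1)[OF F_tendsto] root by simp
    then show "\<forall>\<^sub>F a' in at a. h a' < y"
      by (rule eventually_mono) (use mono strict_mono_less in blast)
  qed
  then show ?thesis by (simp add: continuous_at_imp_continuous_on isCont_def)
qed

lemma continuous_on_case_prod_if_abs_diff_le:
  fixes F :: "real \<Rightarrow> real \<Rightarrow> real"
  assumes "\<And>x1 y1 x2 y2. \<bar>F x1 y1 - F x2 y2\<bar> \<le> C * (\<bar>x1 - x2\<bar> + \<bar>y1 - y2\<bar>)"
  shows "continuous_on UNIV (\<lambda>(x, y). F x y)"
proof (rule lipschitz_on_continuous_on)
  have "\<bar>F 1 0 - F 0 0\<bar> \<le> C" using assms[of 1 0 0 0] by simp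
  then have "0 \<le> C" by (meson abs_ge_zero order_trans)
  show "(2 * C)-lipschitz_on UNIV (\<lambda>(x, y). F x y)"
  proof (rule lipschitz_onI)
    fix p q :: "real \<times> real"
    have "\<bar>F (fst p) (snd p) - F (fst q) (snd q)\<bar> \<le> C * (\<bar>fst p - fst q\<bar> + \<bar>snd p - snd q\<bar>)"
      by (rule assms)
    also have "\<dots> \<le> C * (dist p q + dist p q)"
      using dist_fst_le[of p q] dist_snd_le[of p q] \<open>0 \<le> C\<close>
      by (intro mult_left_mono add_mono) (auto simp: dist_real_def)
    finally show "dist ((\<lambda>(x, y). F x y) p) ((\<lambda>(x, y). F x y) q) \<le> 2 * C * dist p q"
      by (simp add: dist_real_def case_prod_beta)
  qed (use \<open>0 \<le> C\<close> in simp)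
qed

section \<open>Comparison principles\<close>

lemma difference_quotient_pos_near:
  fixes w :: "real \<Rightarrow> real"
  assumes "(w has_real_derivative d) (at s within S)" and "0 < d"
  obtains e where "0 < e" and "\<And>y. y \<in> S \<Longrightarrow> y \<noteq> s \<Longrightarrow> dist y s < e \<Longrightarrow> 0 < (w y - w s) / (y - s)"
proof -
  have "\<forall>\<^sub>F y in at s within S. 0 < (w y - w s) / (y - s)"
    using assms has_field_derivative_iff order_tendstoD(1) by blast
  then show thesis using that unfolding eventually_at by blast
qed

lemma first_zero_after_pos:
  fixes w :: "real \<Rightarrow> real"
  assumes cont: "continuous_on {d..t} w" and "0 < w d" and "w t \<le> 0" and "d \<le> t"
  obtains z where "d < z" and "z \<le> t" and "w z = 0" and "\<And>s. d \<le> s \<Longrightarrow> s < z \<Longrightarrow> 0 < w s"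
proof -
  define S where "S = {s \<in> {d..t}. w s \<le> 0}"
  have "closed S" unfolding S_def
    using continuous_closed_preimage[OF cont closed_atLeastAtMost, of "{..0}"]
    by (simp add: vimage_def Int_def)
  moreover have "t \<in> S" using assms unfolding S_def by auto
  moreover have "bdd_below S" unfolding S_def by (auto intro: bdd_belowI[of _ d])
  moreover define z where "z = Inf S"
  ultimately have zS: "z \<in> S" and z_le: "\<And>s. s \<in> S \<Longrightarrow> z \<le> s"
    by (auto intro: closed_contains_Inf cInf_lower)
  have "d < z" using zS \<open>0 < w d\<close> unfolding S_def by (cases "z = d") auto
  have pos: "0 < w s" if "d \<le> s" "s < z" for s
    using z_le[of s] that zS unfolding S_def by force
  have "w z = 0"
  proof (rule ccontr)
    assume "w z \<noteq> 0"
    then have "w z < 0" using zS unfolding S_def by auto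
    have "continuous_on {d..z} w"
      using cont by (rule continuous_on_subset) (use zS in \<open>auto simp: S_def\<close>)
    then obtain x where "d \<le> x" "x \<le> z" "w x = 0"
      using IVT2'[of w z 0 d] \<open>w z < 0\<close> \<open>0 < w d\<close> \<open>d < z\<close> by auto
    then show False using pos[of x] \<open>w z < 0\<close> by (cases "x = z") auto
  qed
  moreover have "z \<le> t" using zS unfolding S_def by simp
  ultimately show thesis using that \<open>d < z\<close> pos by blast
qed

lemma pos_if_deriv_pos_at_zeros:
  fixes w :: "real \<Rightarrow> real"
  assumes cont: "continuous_on {0..b} w" and "w 0 = 0"
    and zeros: "\<And>t. t \<in> {0..b} \<Longrightarrow> w t = 0 \<Longrightarrow> \<exists>d>0. (w has_real_derivative d) (at t within {0..b})"
    and t: "t \<in> {0<..b}"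
  shows "0 < w t"
proof (rule ccontr)
  assume "\<not> 0 < w t"
  obtain d0 where "(w has_real_derivative d0) (at 0 within {0..b})" "0 < d0"
    using zeros[of 0] \<open>w 0 = 0\<close> t by auto
  then obtain e where e: "0 < e"
    "\<And>y. y \<in> {0..b} \<Longrightarrow> y \<noteq> 0 \<Longrightarrow> dist y 0 < e \<Longrightarrow> 0 < (w y - w 0) / (y - 0)"
    by (rule difference_quotient_pos_near) blast
  define d where "d = min (e/2) (t/2)"
  have d: "0 < d" "d < t" "d < e" using e t by (auto simp: d_def)
  have "0 < w d" using e(2)[of d] d t \<open>w 0 = 0\<close> by (auto simp: zero_less_divide_iff)
  \<comment> \<open>at the first zero \<open>z\<close> after \<open>d\<close>, \<open>w\<close> is positive on the left, contradicting \<open>w' z > 0\<close>\<close>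
  moreover have "continuous_on {d..t} w"
    using cont by (rule continuous_on_subset) (use d t in auto)
  ultimately obtain z where z: "d < z" "z \<le> t" "w z = 0" "\<And>s. d \<le> s \<Longrightarrow> s < z \<Longrightarrow> 0 < w s"
    using first_zero_after_pos[of d t w] \<open>\<not> 0 < w t\<close> d by auto
  have "z \<in> {0..b}" using z d t by auto
  then obtain dz where "(w has_real_derivative dz) (at z within {0..b})" "0 < dz"
    using zeros z(3) by blast
  then obtain e' where e': "0 < e'"
    "\<And>y. y \<in> {0..b} \<Longrightarrow> y \<noteq> z \<Longrightarrow> dist y z < e' \<Longrightarrow> 0 < (w y - w z) / (y - z)"
    by (rule difference_quotient_pos_near) blast
  define y where "y = max d (z - e'/2)"
  have y: "d \<le> y" "y < z" "dist y z < e'" using z(1) e' by (auto simp: y_def dist_real_def)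
  then have "0 < (w y - w z) / (y - z)" using e'(2)[of y] d \<open>z \<in> {0..b}\<close> by auto
  then show False using z(3) z(4)[OF y(1,2)] y by (simp add: zero_less_divide_iff)
qed

lemma periodic1_no_zero_if_deriv_pos_at_zeros:
  fixes w w' :: "real \<Rightarrow> real"
  assumes "periodic1 w" and der: "\<And>x. (w has_real_derivative w' x) (at x)"
    and zeros: "\<And>z. w z = 0 \<Longrightarrow> 0 < w' z"
  shows "w x \<noteq> 0"
proof
  assume "w x = 0"
  define v where "v t = w (t + x)" for t
  have dv: "(v has_real_derivative w' (t + x)) (at t)" for t
    unfolding v_def using der[of "t + x"] DERIV_shift by blast
  then have "continuous_on {0..1} v"
    by (meson DERIV_isCont continuous_at_imp_continuous_on)
  moreover have "\<exists>d>0. (v has_real_derivative d) (at t within {0..1})" if "v t = 0" for t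
    using zeros[of "t + x"] that dv[of t] by (auto simp: v_def intro: has_field_derivative_at_within)
  ultimately have "0 < v 1"
    using \<open>w x = 0\<close> by (intro pos_if_deriv_pos_at_zeros[of 1 v]) (auto simp: v_def)
  moreover have "v 1 = w x" using \<open>periodic1 w\<close> unfolding v_def periodic1_def by (metis add.commute)
  ultimately show False using \<open>w x = 0\<close> by simp
qed

lemma periodic_solution_K_bound:
  fixes f K V :: "real \<Rightarrow> real"
  assumes "periodic1 f" and der: "\<And>x. (f has_real_derivative H - V x - K (f x)) (at x)"
    and V: "\<And>t. \<bar>V t\<bar> \<le> BV"
  shows "\<bar>K (f x) - H\<bar> \<le> BV"
proof (rule ccontr)
  assume "\<not> ?thesis"
  \<comment> \<open>then \<open>f - f x\<close> crosses zero in one direction only, which a periodic function cannot do\<close>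
  then consider "K (f x) < H - BV" | "H + BV < K (f x)" by linarith
  then show False
  proof cases
    case 1
    have "(\<lambda>y. f y - f x) x \<noteq> 0"
    proof (rule periodic1_no_zero_if_deriv_pos_at_zeros[where w = "\<lambda>y. f y - f x" and
          w' = "\<lambda>y. H - V y - K (f y)"])
      show "periodic1 (\<lambda>y. f y - f x)" using \<open>periodic1 f\<close> by (simp add: periodic1_def)
      show "((\<lambda>y. f y - f x) has_real_derivative H - V y - K (f y)) (at y)" for y
        using DERIV_diff[OF der[of y] DERIV_const[of "f x"]] by simp
      show "0 < H - V y - K (f y)" if "f y - f x = 0" for y
        using 1 V[of y] that by (simp add: abs_le_iff)
    qed
    then show False by simp
  next
    case 2
    have "(\<lambda>y. f x - f y) x \<noteq> 0"
    proof (rule periodic1_no_zero_if_deriv_pos_at_zeros[where w = "\<lambda>y. f x - f y" and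
          w' = "\<lambda>y. - (H - V y - K (f y))"])
      show "periodic1 (\<lambda>y. f x - f y)" using \<open>periodic1 f\<close> by (simp add: periodic1_def)
      show "((\<lambda>y. f x - f y) has_real_derivative - (H - V y - K (f y))) (at y)" for y
        using DERIV_diff[OF DERIV_const[of "f x"] der[of y]] by simp
      show "0 < - (H - V y - K (f y))" if "f x - f y = 0" for y
        using 2 V[of y] that by (simp add: abs_le_iff)
    qed
    then show False by simp
  qed
qed

lemma gronwall_vanishing:
  fixes w w' :: "real \<Rightarrow> real"
  assumes cont: "continuous_on {x0..x} w"
    and der: "\<And>t. x0 < t \<Longrightarrow> t < x \<Longrightarrow> (w has_real_derivative w' t) (at t)"
    and bound: "\<And>t. x0 < t \<Longrightarrow> t < x \<Longrightarrow> \<bar>w' t\<bar> \<le> L * \<bar>w t\<bar>"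
    and "w x0 = 0" and "x0 \<le> x"
  shows "w x = 0"
proof -
  define u where "u t = (w t)\<^sup>2 * exp (- 2 * L * t)" for t
  have "u x \<le> u x0"
  proof (rule DERIV_nonpos_imp_decreasing_open[OF \<open>x0 \<le> x\<close>])
    fix t assume t: "x0 < t" "t < x"
    have "(u has_real_derivative (2 * w t * w' t - 2 * L * (w t)\<^sup>2) * exp (- 2 * L * t)) (at t)"
      unfolding u_def
      by (auto intro!: derivative_eq_intros der[OF t] simp: algebra_simps power2_eq_square)
    moreover have "w t * w' t \<le> L * (w t)\<^sup>2"
    proof -
      have "w t * w' t \<le> \<bar>w t\<bar> * \<bar>w' t\<bar>" by (metis abs_ge_self abs_mult)
      also have "\<dots> \<le> \<bar>w t\<bar> * (L * \<bar>w t\<bar>)" using bound[OF t] by (rule mult_left_mono) simp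
      finally show ?thesis by (simp add: power2_eq_square algebra_simps)
    qed
    then have "(2 * w t * w' t - 2 * L * (w t)\<^sup>2) * exp (- 2 * L * t) \<le> 0"
      by (intro mult_nonpos_nonneg) auto
    ultimately show "\<exists>y. (u has_real_derivative y) (at t) \<and> y \<le> 0" by blast
  next
    show "continuous_on {x0..x} u" unfolding u_def by (intro continuous_intros cont)
  qed
  then show ?thesis using \<open>w x0 = 0\<close> by (simp add: u_def mult_le_0_iff)
qed

section \<open>Uniqueness\<close>

definition cell_solution ::
    "(real \<Rightarrow> real) \<Rightarrow> (real \<Rightarrow> real) \<Rightarrow> real \<Rightarrow> real \<Rightarrow> (real \<Rightarrow> real) \<Rightarrow> bool" where
  "cell_solution G V \<theta> H f \<longleftrightarrow> C1 f \<and> periodic1 f \<and> integral {0..1} f = \<theta> \<and>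
     (\<forall>x. deriv f x + G (f x) + V x = H)"

lemma cell_solution_has_real_derivative:
  assumes "cell_solution G V \<theta> H f"
  shows "(f has_real_derivative H - G (f x) - V x) (at x)"
proof -
  have "deriv f x + G (f x) + V x = H" using assms unfolding cell_solution_def by blast
  then have "deriv f x = H - G (f x) - V x" by linarith
  then show ?thesis using assms C1_has_real_derivative[of f x] unfolding cell_solution_def by simp
qed

lemma cell_solutions_intersect:
  assumes "cell_solution G V \<theta> H1 f1" and "cell_solution G V \<theta> H2 f2"
  obtains z where "f1 z = f2 z"
proof -
  have "continuous_on {0..1} f1" "continuous_on {0..1} f2"
    using assms C1_continuous_on unfolding cell_solution_def by blast+
  then have cont: "continuous_on {0..1} (\<lambda>x. f2 x - f1 x)" by (intro continuous_on_diff)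
  then obtain z where "integral {0..1} (\<lambda>x. f2 x - f1 x) = f2 z - f1 z"
    using integral_mean_value[of 0 1] by auto
  moreover have "integral {0..1} (\<lambda>x. f2 x - f1 x) = 0"
    using assms by (subst integral_diff)
      (auto simp: cell_solution_def intro!: integrable_continuous_interval C1_continuous_on)
  ultimately show thesis using that[of z] by simp
qed

lemma cell_solution_Hbar_le:
  assumes "cell_solution G V \<theta> H1 f1" and "cell_solution G V \<theta> H2 f2"
  shows "H2 \<le> H1"
proof (rule ccontr)
  assume "\<not> H2 \<le> H1"
  obtain z where "f1 z = f2 z" using cell_solutions_intersect[OF assms] .
  moreover have "(\<lambda>x. f2 x - f1 x) z \<noteq> 0"
  proof (rule periodic1_no_zero_if_deriv_pos_at_zeros[where w = "\<lambda>x. f2 x - f1 x" and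
        w' = "\<lambda>x. (H2 - G (f2 x) - V x) - (H1 - G (f1 x) - V x)"])
    show "periodic1 (\<lambda>x. f2 x - f1 x)" using assms by (simp add: cell_solution_def periodic1_def)
    show "((\<lambda>x. f2 x - f1 x) has_real_derivative (H2 - G (f2 x) - V x) - (H1 - G (f1 x) - V x)) (at x)"
      for x using DERIV_diff[OF cell_solution_has_real_derivative[OF assms(2)]
          cell_solution_has_real_derivative[OF assms(1)]] .
    show "0 < (H2 - G (f2 x) - V x) - (H1 - G (f1 x) - V x)" if "f2 x - f1 x = 0" for x
      using that \<open>\<not> H2 \<le> H1\<close> by simp
  qed
  ultimately show False by simp
qed

lemma cell_solution_unique_for_Hbar:
  assumes "C1 G" and f1: "cell_solution G V \<theta> H f1" and f2: "cell_solution G V \<theta> H f2"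
  shows "f1 = f2"
proof (rule ext)
  fix x
  define w where "w y = f2 y - f1 y" for y
  obtain z where "f1 z = f2 z" by (rule cell_solutions_intersect[OF f1 f2])
  then have "w z = 0" by (simp add: w_def)
  obtain B1 where B1: "\<And>y. \<bar>f1 y\<bar> \<le> B1"
    using f1 periodic1_bounded C1_continuous_on unfolding cell_solution_def by blast
  obtain B2 where B2: "\<And>y. \<bar>f2 y\<bar> \<le> B2"
    using f2 periodic1_bounded C1_continuous_on unfolding cell_solution_def by blast
  define R where "R = max B1 B2"
  obtain L where L: "L-lipschitz_on {-R..R} G" using C1_lipschitz_on_Icc[OF \<open>C1 G\<close>] .
  have der: "(w has_real_derivative G (f1 y) - G (f2 y)) (at y)" for y
    using DERIV_diff[OF cell_solution_has_real_derivative[OF f2] cell_solution_has_real_derivative[OF f1]]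
    unfolding w_def by simp
  have bound: "\<bar>G (f1 y) - G (f2 y)\<bar> \<le> L * \<bar>w y\<bar>" for y
  proof -
    have "f1 y \<in> {-R..R}" "f2 y \<in> {-R..R}"
      using B1[of y] B2[of y] unfolding R_def abs_le_iff by auto
    then have "dist (G (f1 y)) (G (f2 y)) \<le> L * dist (f1 y) (f2 y)" by (rule lipschitz_onD[OF L])
    then show ?thesis by (simp add: w_def dist_real_def abs_minus_commute)
  qed
  have "continuous_on UNIV w" using der by (meson DERIV_isCont continuous_at_imp_continuous_on)
  moreover have "z \<le> x + of_nat (nat \<lceil>z - x\<rceil>)" using real_nat_ceiling_ge[of "z - x"] by simp
  ultimately have "w (x + of_nat (nat \<lceil>z - x\<rceil>)) = 0"
    using gronwall_vanishing[of z _ w "\<lambda>y. G (f1 y) - G (f2 y)" L] der bound \<open>w z = 0\<close>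
    by (meson continuous_on_subset subset_UNIV)
  moreover have "periodic1 w" using f1 f2 by (simp add: w_def cell_solution_def periodic1_def)
  ultimately have "w x = 0" by (simp add: periodic1_add_of_nat)
  then show "f1 x = f2 x" by (simp add: w_def)
qed

lemma cell_solution_unique:
  assumes "C1 G" and "cell_solution G V \<theta> H1 f1" and "cell_solution G V \<theta> H2 f2"
  shows "H1 = H2" and "f1 = f2"
proof -
  show "H1 = H2" using cell_solution_Hbar_le assms(2,3) by (metis order_antisym)
  then show "f1 = f2" using cell_solution_unique_for_Hbar assms by blast
qed

section \<open>Solutions of the truncated equation\<close>

locale lipschitz_ode =
  fixes V K :: "real \<Rightarrow> real" and L BV BK :: real
  assumes L_pos: "0 < L" and V_continuous: "continuous_on UNIV V"
    and K_lipschitz: "L-lipschitz_on UNIV K"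
    and V_bounded: "\<And>t. \<bar>V t\<bar> \<le> BV" and K_bounded: "\<And>y. \<bar>K y\<bar> \<le> BK"
begin

lemma K_continuous: "continuous_on UNIV K"
  using K_lipschitz by (rule lipschitz_on_continuous_on)

lemma K_diff_le: "\<bar>K x - K y\<bar> \<le> L * \<bar>x - y\<bar>"
  using lipschitz_onD[OF K_lipschitz] by (simp add: dist_real_def)

lemma rhs_bounded: "\<bar>H - V t - K y\<bar> \<le> \<bar>H\<bar> + BV + BK"
  using V_bounded[of t] K_bounded[of y] by linarith

text \<open>
  The solution of \<open>y' = H - V t - K y\<close>, \<open>y 0 = a\<close> on \<open>t \<ge> 0\<close> is obtained as \<open>y t = exp (2 L t) g t\<close>,
  where \<open>g\<close> is the fixed point of the Picard map below on bounded continuous functions; the weight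
  makes the map a contraction with constant \<open>1/2\<close>. For \<open>t \<le> 0\<close> the solution is frozen at \<open>a\<close>.
\<close>

definition picard_integral :: "real \<Rightarrow> (real \<Rightarrow> real) \<Rightarrow> real \<Rightarrow> real" where
  "picard_integral H g t = integral {0..t} (\<lambda>u. H - V u - K (exp (2 * L * u) * g u))"

definition picard :: "real \<Rightarrow> real \<Rightarrow> (real \<Rightarrow> real) \<Rightarrow> real \<Rightarrow> real" where
  "picard H a g t = exp (- (2 * L * max 0 t)) * (a + picard_integral H g t)"

definition picard_op :: "real \<Rightarrow> real \<Rightarrow> (real \<Rightarrow>\<^sub>C real) \<Rightarrow> (real \<Rightarrow>\<^sub>C real)" where
  "picard_op H a g = Bcontfun (picard H a (apply_bcontfun g))"

lemma picard_integrand_continuous: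
  assumes "continuous_on UNIV g"
  shows "continuous_on UNIV (\<lambda>u. H - V u - K (exp (2 * L * u) * g u))"
proof -
  have "continuous_on UNIV (\<lambda>u. exp (2 * L * u) * g u)" by (intro continuous_intros assms)
  then have "continuous_on UNIV (\<lambda>u. K (exp (2 * L * u) * g u))"
    by (rule continuous_on_compose2[OF K_continuous]) auto
  then show ?thesis by (intro continuous_intros V_continuous)
qed

lemma picard_integral_lipschitz:
  "continuous_on UNIV g \<Longrightarrow> (\<bar>H\<bar> + BV + BK)-lipschitz_on UNIV (picard_integral H g)"
  unfolding picard_integral_def[abs_def]
  by (rule integral_lipschitz_on[OF picard_integrand_continuous]) (auto intro: rhs_bounded)

lemma picard_integral_nonpos: "t \<le> 0 \<Longrightarrow> picard_integral H g t = 0"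
  unfolding picard_integral_def by (cases "t = 0") auto

lemma picard_in_bcontfun:
  assumes g: "continuous_on UNIV g"
  shows "picard H a g \<in> bcontfun"
proof -
  define C where "C = \<bar>H\<bar> + BV + BK"
  have "0 \<le> C" using V_bounded[of 0] K_bounded[of 0] by (simp add: C_def)
  have cont: "continuous_on UNIV (picard H a g)"
    unfolding picard_def
    by (intro continuous_intros lipschitz_on_continuous_on[OF picard_integral_lipschitz[OF g]])
  have "\<bar>picard H a g t\<bar> \<le> \<bar>a\<bar> + C / (2 * L)" for t
  proof (cases "t \<le> 0")
    case True
    then show ?thesis using L_pos \<open>0 \<le> C\<close> by (simp add: picard_def picard_integral_nonpos)
  next
    case False
    have "\<bar>picard_integral H g t\<bar> \<le> C * t"
      using lipschitz_onD[OF picard_integral_lipschitz[OF g], of t 0] False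
      by (simp add: C_def dist_real_def picard_integral_nonpos)
    moreover have e: "0 < exp (- (2 * L * t))" "exp (- (2 * L * t)) \<le> 1" using L_pos False by auto
    ultimately have "\<bar>picard H a g t\<bar> \<le> exp (- (2 * L * t)) * \<bar>a\<bar> + C * (t * exp (- (2 * L * t)))"
      using False by (simp add: picard_def abs_mult algebra_simps mult_left_mono
          order.trans[OF abs_triangle_ineq])
    also have "\<dots> \<le> \<bar>a\<bar> + C * (1 / (2 * L))"
      using e mult_exp_neg_le[of "2 * L" t] L_pos \<open>0 \<le> C\<close>
      by (intro add_mono mult_left_mono) (auto simp: mult_left_le_one_le)
    finally show ?thesis by simp
  qed
  then have "bounded (range (picard H a g))"
    unfolding bounded_iff by (auto simp del: abs_le_D1)
  then show ?thesis using cont by (simp add: bcontfun_def)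
qed

lemma picard_op_apply: "apply_bcontfun (picard_op H a g) = picard H a (apply_bcontfun g)"
  unfolding picard_op_def by (rule Bcontfun_inverse[OF picard_in_bcontfun]) simp

lemma picard_integral_dist_le:
  fixes g1 g2 :: "real \<Rightarrow>\<^sub>C real"
  assumes "0 \<le> t"
  shows "\<bar>picard_integral H g1 t - picard_integral H g2 t\<bar>
    \<le> dist g1 g2 * (exp (2 * L * t) - 1) / 2"
proof -
  define h where "h g u = H - V u - K (exp (2 * L * u) * apply_bcontfun g u)" for g u
  have int: "h g integrable_on {0..t}" for g
    unfolding h_def
    by (rule integrable_continuous_interval, rule continuous_on_subset[OF picard_integrand_continuous])
      auto
  have "picard_integral H g1 t - picard_integral H g2 t = integral {0..t} (h g1) - integral {0..t} (h g2)"
    by (simp add: picard_integral_def h_def[abs_def])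
  also have "\<dots> = integral {0..t} (\<lambda>u. h g1 u - h g2 u)"
    by (rule integral_diff[OF int int, symmetric])
  also have "\<bar>\<dots>\<bar> \<le> integral {0..t} (\<lambda>u. L * dist g1 g2 * exp (2 * L * u))"
  proof (rule Henstock_Kurzweil_Integration.integral_norm_bound_integral[where 'a = real,
        unfolded real_norm_def])
    show "(\<lambda>u. h g1 u - h g2 u) integrable_on {0..t}" by (rule integrable_diff[OF int int])
    show "(\<lambda>u. L * dist g1 g2 * exp (2 * L * u)) integrable_on {0..t}"
      by (intro integrable_continuous_interval continuous_intros)
    fix u
    have "\<bar>h g1 u - h g2 u\<bar> \<le> L * \<bar>exp (2 * L * u) * g2 u - exp (2 * L * u) * g1 u\<bar>"
      using K_diff_le by (simp add: h_def)
    also have "\<dots> = L * exp (2 * L * u) * dist (g1 u) (g2 u)"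
      by (simp add: abs_mult dist_real_def abs_minus_commute right_diff_distrib[symmetric])
    also have "\<dots> \<le> L * exp (2 * L * u) * dist g1 g2"
      using L_pos by (intro mult_left_mono dist_bounded) auto
    finally show "\<bar>h g1 u - h g2 u\<bar> \<le> L * dist g1 g2 * exp (2 * L * u)"
      by (simp add: algebra_simps)
  qed
  also have "\<dots> = dist g1 g2 * (exp (2 * L * t) - 1) / 2"
    using integral_exp_mult[of "2 * L" t] L_pos \<open>0 \<le> t\<close> by simp
  finally show ?thesis .
qed

lemma picard_op_contraction: "dist (picard_op H a g1) (picard_op H a g2) \<le> 1/2 * dist g1 g2"
proof (rule dist_bound)
  fix t
  show "dist (picard_op H a g1 t) (picard_op H a g2 t) \<le> 1/2 * dist g1 g2"
  proof (cases "t \<le> 0")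
    case True
    then show ?thesis by (simp add: picard_op_apply picard_def picard_integral_nonpos)
  next
    case False
    have "dist (picard_op H a g1 t) (picard_op H a g2 t)
        = exp (- (2 * L * t)) * \<bar>picard_integral H g1 t - picard_integral H g2 t\<bar>"
      using False
      by (simp add: picard_op_apply picard_def dist_real_def abs_mult right_diff_distrib[symmetric])
    also have "\<dots> \<le> exp (- (2 * L * t)) * (dist g1 g2 * (exp (2 * L * t) - 1) / 2)"
      using picard_integral_dist_le[of t H g1 g2] False by (intro mult_left_mono) auto
    also have "\<dots> = dist g1 g2 * (1 - exp (- (2 * L * t))) / 2"
      by (simp add: field_simps exp_minus)
    also have "\<dots> \<le> 1/2 * dist g1 g2" by (simp add: mult_left_le)
    finally show ?thesis .
  qed
qed

definition picard_fix :: "real \<Rightarrow> real \<Rightarrow> (real \<Rightarrow>\<^sub>C real)" where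
  "picard_fix H a = (THE g. picard_op H a g = g)"

lemma picard_fix: "picard_op H a (picard_fix H a) = picard_fix H a"
proof -
  have "\<exists>!g. picard_op H a g = g"
    by (rule banach_fix_type[of "1/2"]) (use picard_op_contraction in auto)
  then show ?thesis unfolding picard_fix_def by (rule theI')
qed

definition sol :: "real \<Rightarrow> real \<Rightarrow> real \<Rightarrow> real" where
  "sol H a t = exp (2 * L * max 0 t) * picard_fix H a t"

lemma sol_continuous: "continuous_on S (sol H a)"
  unfolding sol_def by (intro continuous_intros) simp

lemma sol_eq_integral: "sol H a t = a + integral {0..t} (\<lambda>u. H - V u - K (sol H a u))"
proof -
  have "apply_bcontfun (picard_fix H a) t = picard H a (picard_fix H a) t"
    using picard_fix[of H a] picard_op_apply by metis
  then have "sol H a t = a + picard_integral H (picard_fix H a) t"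
    by (simp add: sol_def picard_def exp_minus field_simps)
  also have "picard_integral H (picard_fix H a) t = integral {0..t} (\<lambda>u. H - V u - K (sol H a u))"
    unfolding picard_integral_def by (rule integral_cong) (simp add: sol_def)
  finally show ?thesis .
qed

lemma sol_0 [simp]: "sol H a 0 = a"
  using sol_eq_integral[of H a 0] by simp

lemma picard_op_params_dist_le:
  "dist (picard_op H1 a1 g) (picard_op H2 a2 g) \<le> \<bar>a1 - a2\<bar> + \<bar>H1 - H2\<bar> / (2 * L)"
proof (rule dist_bound)
  fix t
  show "dist (picard_op H1 a1 g t) (picard_op H2 a2 g t) \<le> \<bar>a1 - a2\<bar> + \<bar>H1 - H2\<bar> / (2 * L)"
  proof (cases "t \<le> 0")
    case True
    then show ?thesis
      using L_pos by (simp add: picard_op_apply picard_def picard_integral_nonpos dist_real_def)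
  next
    case False
    have cont: "continuous_on {0..t} (\<lambda>u. H - V u - K (exp (2 * L * u) * g u))" for H
      by (rule continuous_on_subset[OF picard_integrand_continuous]) auto
    have "picard_integral H1 g t - picard_integral H2 g t = (H1 - H2) * t"
      using False unfolding picard_integral_def
      by (subst integral_diff[symmetric]) (auto intro: integrable_continuous_interval cont)
    then have "(a1 + picard_integral H1 g t) - (a2 + picard_integral H2 g t) = (a1 - a2) + (H1 - H2) * t"
      by linarith
    moreover have "picard_op H1 a1 g t - picard_op H2 a2 g t
        = exp (- (2 * L * t)) * ((a1 + picard_integral H1 g t) - (a2 + picard_integral H2 g t))"
      using False by (simp add: picard_op_apply picard_def right_diff_distrib)
    ultimately have "dist (picard_op H1 a1 g t) (picard_op H2 a2 g t)
        = exp (- (2 * L * t)) * \<bar>(a1 - a2) + (H1 - H2) * t\<bar>"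
      by (simp add: dist_real_def abs_mult)
    also have "\<dots> \<le> exp (- (2 * L * t)) * (\<bar>a1 - a2\<bar> + \<bar>H1 - H2\<bar> * t)"
      using False abs_triangle_ineq[of "a1 - a2" "(H1 - H2) * t"]
      by (intro mult_left_mono) (auto simp: abs_mult)
    also have "\<dots> = exp (- (2 * L * t)) * \<bar>a1 - a2\<bar> + \<bar>H1 - H2\<bar> * (t * exp (- (2 * L * t)))"
      by (simp add: algebra_simps)
    also have "\<dots> \<le> \<bar>a1 - a2\<bar> + \<bar>H1 - H2\<bar> * (1 / (2 * L))"
      using False L_pos mult_exp_neg_le[of "2 * L" t]
      by (intro add_mono mult_left_mono) (auto simp: mult_left_le_one_le)
    finally show ?thesis by simp
  qed
qed

lemma picard_fix_dist_le:
  "dist (picard_fix H1 a1) (picard_fix H2 a2) \<le> 2 * (\<bar>a1 - a2\<bar> + \<bar>H1 - H2\<bar> / (2 * L))"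
proof -
  define g where "g = picard_fix H2 a2"
  have "dist (picard_fix H1 a1) g
      \<le> dist (picard_op H1 a1 (picard_fix H1 a1)) (picard_op H1 a1 g) + dist (picard_op H1 a1 g) (picard_op H2 a2 g)"
    using dist_triangle picard_fix g_def by metis
  also have "\<dots> \<le> 1/2 * dist (picard_fix H1 a1) g + (\<bar>a1 - a2\<bar> + \<bar>H1 - H2\<bar> / (2 * L))"
    by (intro add_mono picard_op_contraction picard_op_params_dist_le)
  finally have "dist (picard_fix H1 a1) g \<le> 1/2 * dist (picard_fix H1 a1) g + (\<bar>a1 - a2\<bar> + \<bar>H1 - H2\<bar> / (2 * L))" .
  moreover have "D \<le> 2 * E" if "D \<le> 1/2 * D + E" for D E :: real using that by linarith
  ultimately show ?thesis unfolding g_def by blast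
qed

lemma sol_dist_le:
  obtains C where "0 < C"
    and "\<And>H1 a1 H2 a2 t. t \<in> {0..1} \<Longrightarrow> \<bar>sol H1 a1 t - sol H2 a2 t\<bar> \<le> C * (\<bar>H1 - H2\<bar> + \<bar>a1 - a2\<bar>)"
proof
  define C where "C = 2 * exp (2 * L) * (1 + 1 / (2 * L))"
  show "0 < C" using L_pos by (simp add: C_def add_pos_pos)
  fix H1 a1 H2 a2 t :: real
  assume t: "t \<in> {0..1}"
  have "\<bar>sol H1 a1 t - sol H2 a2 t\<bar> = exp (2 * L * t) * dist (picard_fix H1 a1 t) (picard_fix H2 a2 t)"
    using t by (simp add: sol_def dist_real_def abs_mult right_diff_distrib[symmetric])
  also have "\<dots> \<le> exp (2 * L) * (2 * (\<bar>a1 - a2\<bar> + \<bar>H1 - H2\<bar> / (2 * L)))"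
    using t L_pos by (intro mult_mono order.trans[OF dist_bounded picard_fix_dist_le]) auto
  also have "\<dots> \<le> C * (\<bar>H1 - H2\<bar> + \<bar>a1 - a2\<bar>)"
    using L_pos by (simp add: C_def field_simps)
  finally show "\<bar>sol H1 a1 t - sol H2 a2 t\<bar> \<le> C * (\<bar>H1 - H2\<bar> + \<bar>a1 - a2\<bar>)" .
qed

lemma rhs_sol_continuous: "continuous_on S (\<lambda>u. H - V u - K (sol H a u))"
proof -
  have "continuous_on UNIV (\<lambda>u. H - V u - K (sol H a u))"
    by (intro continuous_intros V_continuous continuous_on_compose2[OF K_continuous sol_continuous]) auto
  then show ?thesis by (rule continuous_on_subset) simp
qed

lemma sol_has_real_derivative_within:
  assumes "t \<in> {0..b}"
  shows "(sol H a has_real_derivative H - V t - K (sol H a t)) (at t within {0..b})"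
proof -
  have "((\<lambda>t. a + integral {0..t} (\<lambda>u. H - V u - K (sol H a u)))
      has_real_derivative 0 + (H - V t - K (sol H a t))) (at t within {0..b})"
    by (rule DERIV_add[OF DERIV_const integral_has_real_derivative[OF rhs_sol_continuous assms]])
  moreover have "(\<lambda>t. a + integral {0..t} (\<lambda>u. H - V u - K (sol H a u))) = sol H a"
    by (intro ext) (rule sol_eq_integral[symmetric])
  ultimately show ?thesis by simp
qed

lemma sol_has_real_derivative:
  assumes "0 < t"
  shows "(sol H a has_real_derivative H - V t - K (sol H a t)) (at t)"
proof -
  have "at t within {0..t + 1} = at t" using assms by (intro at_within_interior) simp
  then show ?thesis using sol_has_real_derivative_within[of t "t + 1" H a] assms by simp
qed

lemma sol_1_bounds: "a + H - (BV + BK) \<le> sol H a 1" "sol H a 1 \<le> a + H + (BV + BK)"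
proof -
  have int: "(\<lambda>u. H - V u - K (sol H a u)) integrable_on {0..1}"
    by (rule integrable_continuous_interval[OF rhs_sol_continuous])
  have "H - (BV + BK) \<le> H - V u - K (sol H a u)" "H - V u - K (sol H a u) \<le> H + (BV + BK)" for u
    using V_bounded[of u] K_bounded[of "sol H a u"] unfolding abs_le_iff by linarith+
  then show "a + H - (BV + BK) \<le> sol H a 1" "sol H a 1 \<le> a + H + (BV + BK)"
    using integral_le[OF integrable_const_ivl int, of "H - (BV + BK)"]
      integral_le[OF int integrable_const_ivl, of "H + (BV + BK)"] sol_eq_integral[of H a 1]
    by auto
qed

lemma strict_mono_sol_1: "strict_mono (\<lambda>H. sol H a 1)"
proof (rule strict_monoI)
  fix H1 H2 :: real
  assume "H1 < H2"
  define w where "w t = sol H2 a t - sol H1 a t" for t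
  \<comment> \<open>at a zero of \<open>w\<close> the \<open>K\<close>-terms cancel and \<open>w' = H2 - H1 > 0\<close>\<close>
  have "\<exists>d>0. (w has_real_derivative d) (at t within {0..1})" if "t \<in> {0..1}" "w t = 0" for t
  proof -
    have "(w has_real_derivative (H2 - V t - K (sol H2 a t)) - (H1 - V t - K (sol H1 a t)))
        (at t within {0..1})"
      unfolding w_def by (intro DERIV_diff sol_has_real_derivative_within that(1))
    moreover have "(H2 - V t - K (sol H2 a t)) - (H1 - V t - K (sol H1 a t)) = H2 - H1"
      using that(2) by (simp add: w_def)
    ultimately show ?thesis using \<open>H1 < H2\<close> by (intro exI[of _ "H2 - H1"]) simp
  qed
  then have "0 < w 1"
    by (intro pos_if_deriv_pos_at_zeros[of 1 w])
      (auto simp: w_def intro: continuous_on_diff sol_continuous)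
  then show "sol H1 a 1 < sol H2 a 1" by (simp add: w_def)
qed

lemma sol_params_continuous:
  assumes "t \<in> {0..1}"
  shows "continuous_on UNIV (\<lambda>(H, a). sol H a t)"
proof -
  obtain C where "\<And>H1 a1 H2 a2. \<bar>sol H1 a1 t - sol H2 a2 t\<bar> \<le> C * (\<bar>H1 - H2\<bar> + \<bar>a1 - a2\<bar>)"
    using sol_dist_le assms by metis
  then show ?thesis by (rule continuous_on_case_prod_if_abs_diff_le)
qed

lemma sol_continuous_in_H: "t \<in> {0..1} \<Longrightarrow> continuous_on S (\<lambda>H. sol H a t)"
  using continuous_on_compose2[OF sol_params_continuous continuous_on_Pair[OF continuous_on_id
        continuous_on_const] subset_UNIV, of t S a] by simp

lemma sol_continuous_in_a: "t \<in> {0..1} \<Longrightarrow> continuous_on S (\<lambda>a. sol H a t)"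
  using continuous_on_compose2[OF sol_params_continuous continuous_on_Pair[OF continuous_on_const
        continuous_on_id] subset_UNIV, of t S H] by simp

lemma mean_sol_params_continuous: "continuous_on UNIV (\<lambda>(H, a). integral {0..1} (sol H a))"
proof -
  obtain C where C: "\<And>H1 a1 H2 a2 t. t \<in> {0..1} \<Longrightarrow>
      \<bar>sol H1 a1 t - sol H2 a2 t\<bar> \<le> C * (\<bar>H1 - H2\<bar> + \<bar>a1 - a2\<bar>)"
    using sol_dist_le by metis
  have "\<bar>integral {0..1} (sol H1 a1) - integral {0..1} (sol H2 a2)\<bar> \<le> C * (\<bar>H1 - H2\<bar> + \<bar>a1 - a2\<bar>)"
    for H1 a1 H2 a2
  proof -
    have int: "sol H a integrable_on {0..1}" for H a
      by (rule integrable_continuous_interval[OF sol_continuous])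
    define c where "c = C * (\<bar>H1 - H2\<bar> + \<bar>a1 - a2\<bar>)"
    have int_diff: "(\<lambda>t. sol H1 a1 t - sol H2 a2 t) integrable_on {0..1}"
      by (rule integrable_diff[OF int int])
    have "- c \<le> sol H1 a1 t - sol H2 a2 t" "sol H1 a1 t - sol H2 a2 t \<le> c" if "t \<in> {0..1}" for t
      using C[OF that, of H1 a1 H2 a2] unfolding c_def abs_le_iff by linarith+
    then have "\<bar>integral {0..1} (\<lambda>t. sol H1 a1 t - sol H2 a2 t)\<bar> \<le> c"
      using integral_le[OF integrable_const_ivl int_diff, of "- c"]
        integral_le[OF int_diff integrable_const_ivl, of c] by (simp add: abs_le_iff)
    then show ?thesis by (simp add: integral_diff[OF int int] c_def)
  qed
  then show ?thesis by (rule continuous_on_case_prod_if_abs_diff_le)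
qed

lemma ex1_returning_H: "\<exists>!H. sol H a 1 = a"
proof (rule ex_ex1I)
  define c where "c = BV + BK"
  have "0 \<le> c" using V_bounded[of 0] K_bounded[of 0] unfolding c_def by linarith
  have "continuous_on {-c..c} (\<lambda>H. sol H a 1)" by (rule sol_continuous_in_H) simp
  moreover have "sol (- c) a 1 \<le> a" "a \<le> sol c a 1"
    using sol_1_bounds[where H = "- c" and a = a] sol_1_bounds[where H = c and a = a]
    by (simp_all add: c_def)
  ultimately show "\<exists>H. sol H a 1 = a"
    using IVT'[of "\<lambda>H. sol H a 1" "- c" a c] \<open>0 \<le> c\<close> by auto
next
  show "H1 = H2" if "sol H1 a 1 = a" "sol H2 a 1 = a" for H1 H2
    using strict_mono_eq[OF strict_mono_sol_1[of a], of H1 H2] that by simp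
qed

definition returning_H :: "real \<Rightarrow> real" where
  "returning_H a = (THE H. sol H a 1 = a)"

lemma sol_returning_H: "sol (returning_H a) a 1 = a"
  unfolding returning_H_def by (rule theI'[OF ex1_returning_H])

lemma returning_H_continuous: "continuous_on UNIV returning_H"
proof (rule continuous_root_of_strict_mono[where F = "\<lambda>H a. sol H a 1 - a"])
  show "strict_mono (\<lambda>H. sol H a 1 - a)" for a
    using strict_mono_sol_1 by (simp add: strict_mono_def)
  show "continuous_on UNIV (\<lambda>a. sol H a 1 - a)" for H
    by (intro continuous_intros sol_continuous_in_a) simp
  show "sol (returning_H a) a 1 - a = 0" for a by (simp add: sol_returning_H)
qed

lemma mean_returning_sol_continuous: "continuous_on UNIV (\<lambda>a. integral {0..1} (sol (returning_H a) a))"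
proof -
  have "continuous_on UNIV (\<lambda>a. (returning_H a, a))"
    by (intro continuous_intros returning_H_continuous)
  from continuous_on_compose2[OF mean_sol_params_continuous this subset_UNIV]
  show ?thesis by simp
qed

end

section \<open>Periodic solutions\<close>

locale periodic_lipschitz_ode = lipschitz_ode +
  assumes V_periodic: "periodic1 V"
begin

lemma sol_add_1:
  assumes "sol H a 1 = a" and "0 \<le> t"
  shows "sol H a (t + 1) = sol H a t"
proof -
  define w where "w s = sol H a (s + 1) - sol H a s" for s
  \<comment> \<open>\<open>s \<mapsto> sol H a (s + 1)\<close> solves the same equation, so uniqueness applies\<close>
  have der: "(w has_real_derivative K (sol H a s) - K (sol H a (s + 1))) (at s)" if "0 < s" for s
  proof -
    have "((\<lambda>s. sol H a (s + 1)) has_real_derivative H - V (s + 1) - K (sol H a (s + 1))) (at s)"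
      unfolding DERIV_shift[symmetric] using that by (intro sol_has_real_derivative) simp
    then have "(w has_real_derivative (H - V (s + 1) - K (sol H a (s + 1))) - (H - V s - K (sol H a s))) (at s)"
      unfolding w_def using that by (intro DERIV_diff sol_has_real_derivative)
    moreover have "V (s + 1) = V s" using V_periodic by (simp add: periodic1_def)
    ultimately show ?thesis by simp
  qed
  have bound: "\<bar>K (sol H a s) - K (sol H a (s + 1))\<bar> \<le> L * \<bar>w s\<bar>" for s
    using K_diff_le by (simp add: w_def abs_minus_commute)
  have "continuous_on {0..t} w" unfolding w_def
    by (intro continuous_intros continuous_on_compose2[OF sol_continuous]) auto
  moreover have "w 0 = 0" using assms(1) by (simp add: w_def)
  ultimately have "w t = 0" using gronwall_vanishing[of 0 t w, OF _ der bound] \<open>0 \<le> t\<close> by simp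
  then show ?thesis by (simp add: w_def)
qed

lemma sol_add_of_nat:
  assumes "sol H a 1 = a" and "0 \<le> t"
  shows "sol H a (t + of_nat n) = sol H a t"
proof (induction n)
  case (Suc n)
  have "sol H a (t + of_nat (Suc n)) = sol H a ((t + of_nat n) + 1)" by (simp add: add_ac)
  also have "\<dots> = sol H a (t + of_nat n)" using assms by (intro sol_add_1) auto
  finally show ?case using Suc by simp
qed simp

definition periodic_sol :: "real \<Rightarrow> real \<Rightarrow> real" where
  "periodic_sol a x = sol (returning_H a) a (frac x)"

lemma periodic_sol_eq_sol:
  assumes "0 \<le> x + of_nat n"
  shows "periodic_sol a x = sol (returning_H a) a (x + of_nat n)"
proof -
  have "0 \<le> \<lfloor>x + of_nat n\<rfloor>" using assms by (simp only: zero_le_floor)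
  then have "0 \<le> \<lfloor>x\<rfloor> + int n" by (metis floor_add_int of_int_of_nat_eq)
  then have "x + of_nat n = frac x + of_nat (nat (\<lfloor>x\<rfloor> + int n))" by (simp add: frac_def)
  then show ?thesis
    using sol_add_of_nat[OF sol_returning_H frac_ge_0] by (simp add: periodic_sol_def)
qed

lemma periodic_sol_nonneg: "0 \<le> t \<Longrightarrow> periodic_sol a t = sol (returning_H a) a t"
  using periodic_sol_eq_sol[of t 0] by simp

lemma periodic_sol_0 [simp]: "periodic_sol a 0 = a"
  by (simp add: periodic_sol_nonneg)

lemma periodic1_periodic_sol: "periodic1 (periodic_sol a)"
  by (simp add: periodic1_def periodic_sol_def frac_1_eq)

lemma periodic_sol_has_real_derivative:
  "(periodic_sol a has_real_derivative returning_H a - V x - K (periodic_sol a x)) (at x)"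
proof -
  define n where "n = nat \<lceil>1 - x\<rceil>"
  have "1 \<le> x + of_nat n" using real_nat_ceiling_ge[of "1 - x"] by (simp add: n_def)
  then have "((\<lambda>y. sol (returning_H a) a (y + of_nat n)) has_real_derivative
      returning_H a - V (x + of_nat n) - K (sol (returning_H a) a (x + of_nat n))) (at x)"
    unfolding DERIV_shift[symmetric] by (intro sol_has_real_derivative) simp
  moreover have "V (x + of_nat n) = V x" by (rule periodic1_add_of_nat[OF V_periodic])
  moreover have "sol (returning_H a) a (x + of_nat n) = periodic_sol a x"
    using periodic_sol_eq_sol[of x n a] \<open>1 \<le> x + of_nat n\<close> by simp
  ultimately have "((\<lambda>y. sol (returning_H a) a (y + of_nat n)) has_real_derivative
      returning_H a - V x - K (periodic_sol a x)) (at x)" by simp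
  then show ?thesis
    by (rule has_field_derivative_transform_within_open[of _ _ _ "{- of_nat n<..}"])
      (use \<open>1 \<le> x + of_nat n\<close> in \<open>auto intro!: periodic_sol_eq_sol[symmetric]\<close>)
qed

lemma periodic_sol_continuous: "continuous_on S (periodic_sol a)"
  by (meson periodic_sol_has_real_derivative DERIV_isCont continuous_at_imp_continuous_on)

lemma K_periodic_sol_oscillation: "\<bar>K (periodic_sol a x) - K a\<bar> \<le> 2 * BV"
  using periodic_solution_K_bound[OF periodic1_periodic_sol periodic_sol_has_real_derivative
      V_bounded, of a x]
    periodic_solution_K_bound[OF periodic1_periodic_sol periodic_sol_has_real_derivative
      V_bounded, of a 0]
  by simp

lemma periodic_sol_avoids:
  assumes "2 * BV < \<bar>K c - K a\<bar>"
  shows "a < c \<Longrightarrow> periodic_sol a x < c" and "c < a \<Longrightarrow> c < periodic_sol a x"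
proof -
  have "c \<noteq> periodic_sol a y" for y using K_periodic_sol_oscillation[of a y] assms by auto
  then have "c \<notin> range (periodic_sol a)" by auto
  moreover have "{a..periodic_sol a x} \<subseteq> range (periodic_sol a)" "{periodic_sol a x..a} \<subseteq> range (periodic_sol a)"
  proof -
    have "connected (range (periodic_sol a))"
      by (intro connected_continuous_image periodic_sol_continuous connected_UNIV)
    moreover have "a \<in> range (periodic_sol a)" by (metis periodic_sol_0 rangeI)
    moreover have "periodic_sol a x \<in> range (periodic_sol a)" by simp
    ultimately show "{a..periodic_sol a x} \<subseteq> range (periodic_sol a)" "{periodic_sol a x..a} \<subseteq> range (periodic_sol a)"
      by (simp_all add: connected_contains_Icc)
  qed
  ultimately show "a < c \<Longrightarrow> periodic_sol a x < c" and "c < a \<Longrightarrow> c < periodic_sol a x"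
    by (meson atLeastAtMost_iff less_imp_le not_le subsetD)+
qed

lemma abs_periodic_sol_less:
  assumes "\<And>c. \<bar>c\<bar> = R \<Longrightarrow> 2 * BV < \<bar>K c - K a\<bar>" and "\<bar>a\<bar> < R"
  shows "\<bar>periodic_sol a x\<bar> < R"
  using periodic_sol_avoids(1)[of R a x] periodic_sol_avoids(2)[of "- R" a x] assms
  by (simp add: abs_less_iff)

lemma mean_periodic_sol_attains:
  assumes "a1 < \<theta>" "\<theta> < a2" and "2 * BV < \<bar>K \<theta> - K a1\<bar>" "2 * BV < \<bar>K \<theta> - K a2\<bar>"
  obtains a where "a \<in> {a1..a2}" and "integral {0..1} (periodic_sol a) = \<theta>"
proof -
  have mean: "integral {0..1} (periodic_sol a) = integral {0..1} (sol (returning_H a) a)" for a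
    by (rule integral_cong) (simp add: periodic_sol_nonneg)
  have int: "periodic_sol a integrable_on {0..1}" for a
    by (rule integrable_continuous_interval[OF periodic_sol_continuous])
  have "periodic_sol a1 x \<le> \<theta>" "\<theta> \<le> periodic_sol a2 x" for x
    using periodic_sol_avoids(1)[OF assms(3) \<open>a1 < \<theta>\<close>, of x]
      periodic_sol_avoids(2)[OF assms(4) \<open>\<theta> < a2\<close>, of x] by auto
  then have "integral {0..1} (periodic_sol a1) \<le> \<theta>" "\<theta> \<le> integral {0..1} (periodic_sol a2)"
    using integral_le[OF int integrable_const_ivl, of a1 \<theta>]
      integral_le[OF integrable_const_ivl int, of \<theta> a2] by auto
  moreover have "continuous_on {a1..a2} (\<lambda>a. integral {0..1} (sol (returning_H a) a))"
    using mean_returning_sol_continuous by (rule continuous_on_subset) simp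
  ultimately obtain a where "a \<in> {a1..a2}" "integral {0..1} (sol (returning_H a) a) = \<theta>"
    using IVT'[of "\<lambda>a. integral {0..1} (sol (returning_H a) a)" a1 \<theta> a2] assms(1,2)
    unfolding mean by force
  then show thesis using that mean by simp
qed

end

section \<open>Existence\<close>

lemma cell_solution_if_has_real_derivative:
  assumes "C1 G" and "continuous_on UNIV V" and "periodic1 f" and "integral {0..1} f = \<theta>"
    and der: "\<And>x. (f has_real_derivative H - V x - G (f x)) (at x)"
  shows "cell_solution G V \<theta> H f"
proof -
  have "continuous_on UNIV f" using der by (meson DERIV_isCont continuous_at_imp_continuous_on)
  then have "continuous_on UNIV (\<lambda>x. H - V x - G (f x))"
    by (intro continuous_intros assms(2) continuous_on_compose2[OF C1_continuous_on[OF assms(1)]]) auto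
  then have "C1 f" using der by (rule C1_if_has_real_derivative[rotated])
  moreover have "deriv f x + G (f x) + V x = H" for x using DERIV_imp_deriv[OF der[of x]] by simp
  ultimately show ?thesis using assms unfolding cell_solution_def by blast
qed

lemma cell_solution_exists:
  assumes G: "C1 G" "coercive G" and V: "continuous_on UNIV V" "periodic1 V"
  obtains H f where "cell_solution G V \<theta> H f"
proof -
  obtain BV where BV: "\<And>t. \<bar>V t\<bar> \<le> BV" using periodic1_bounded[OF V] by blast
  obtain A0 where A0: "\<And>p. A0 \<le> \<bar>p\<bar> \<Longrightarrow> G \<theta> + 2 * BV < G p"
    using coercive_gt_outside[OF G(2)] by blast
  define A where "A = max A0 (\<bar>\<theta>\<bar> + 1)"
  have A: "- A < \<theta>" "\<theta> < A" "G \<theta> + 2 * BV < G (- A)" "G \<theta> + 2 * BV < G A"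
    using A0[of A] A0[of "- A"] by (auto simp: A_def)
  then have "{-A..A} \<noteq> {}" by simp
  then obtain pM where pM: "\<And>p. p \<in> {-A..A} \<Longrightarrow> G p \<le> G pM"
    using continuous_attains_sup[OF compact_Icc _ C1_continuous_on[OF G(1)]] by blast
  obtain R0 where R0: "\<And>p. R0 \<le> \<bar>p\<bar> \<Longrightarrow> G pM + 2 * BV < G p"
    using coercive_gt_outside[OF G(2)] by blast
  define R where "R = max R0 (A + 1)"
  have "0 \<le> R" using A by (simp add: R_def)
  define K where "K p = G (max (- R) (min R p))" for p
  have K_G: "K p = G p" if "\<bar>p\<bar> \<le> R" for p using that by (simp add: K_def abs_le_iff)
  obtain L BK where "0 < L" "L-lipschitz_on UNIV K" "\<And>p. \<bar>K p\<bar> \<le> BK"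
    using C1_clamp_lipschitz_bounded[OF G(1) \<open>0 \<le> R\<close>] unfolding K_def by blast
  then interpret periodic_lipschitz_ode V K L BV BK
    by unfold_locales (use BV V in auto)
  have "\<bar>\<theta>\<bar> \<le> R" "A + 1 \<le> R" using A by (auto simp: R_def)
  then have "2 * BV < \<bar>K \<theta> - K (- A)\<bar>" "2 * BV < \<bar>K \<theta> - K A\<bar>"
    using A K_G[of \<theta>] K_G[of "- A"] K_G[of A] by auto
  then obtain a where a: "a \<in> {-A..A}" "integral {0..1} (periodic_sol a) = \<theta>"
    using mean_periodic_sol_attains[OF A(1,2)] by blast
  \<comment> \<open>\<open>K\<close> varies by at most \<open>2 BV\<close> along the solution, so the solution never meets \<open>\<plusminus>R\<close>\<close>
  have "2 * BV < \<bar>K c - K a\<bar>" if "\<bar>c\<bar> = R" for c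
  proof -
    have "G pM + 2 * BV < G c" using R0 that by (simp add: R_def)
    moreover have "G a \<le> G pM" using pM a(1) by blast
    moreover have "K c = G c" "K a = G a" using K_G that a(1) \<open>A + 1 \<le> R\<close> by auto
    ultimately show ?thesis by linarith
  qed
  moreover have "\<bar>a\<bar> < R" using a(1) \<open>A + 1 \<le> R\<close> by auto
  ultimately have "\<bar>periodic_sol a x\<bar> < R" for x by (rule abs_periodic_sol_less)
  then have "K (periodic_sol a x) = G (periodic_sol a x)" for x by (intro K_G less_imp_le)
  then have "(periodic_sol a has_real_derivative returning_H a - V x - G (periodic_sol a x)) (at x)" for x
    using periodic_sol_has_real_derivative[of a x] by simp
  then have "cell_solution G V \<theta> (returning_H a) (periodic_sol a)"
    by (rule cell_solution_if_has_real_derivative[OF G(1) V(1) periodic1_periodic_sol a(2)])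
  then show thesis by (rule that)
qed

theorem lemma4p1:
  fixes G V :: "real \<Rightarrow> real" and \<theta> :: real
  assumes "C1 G" and "coercive G"
    and "Lip V" and "periodic1 V"
  shows "\<exists>!(Hbar, f). C1 f \<and> periodic1 f \<and> integral {0..1} f = \<theta> \<and>
            (\<forall>x. deriv f x + G (f x) + V x = Hbar)"
proof -
  have "continuous_on UNIV V"
    using \<open>Lip V\<close> lipschitz_on_continuous_on unfolding Lip_def by blast
  then obtain H f where sol: "cell_solution G V \<theta> H f"
    using cell_solution_exists[OF assms(1,2) _ assms(4)] by blast
  show ?thesis
  proof (rule ex1I[of _ "(H, f)"])
    show "case (H, f) of (Hbar, f) \<Rightarrow> C1 f \<and> periodic1 f \<and> integral {0..1} f = \<theta> \<and>
        (\<forall>x. deriv f x + G (f x) + V x = Hbar)"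
      using sol unfolding cell_solution_def by simp
  next
    fix p assume "case p of (Hbar, f) \<Rightarrow> C1 f \<and> periodic1 f \<and> integral {0..1} f = \<theta> \<and>
        (\<forall>x. deriv f x + G (f x) + V x = Hbar)"
    then have "cell_solution G V \<theta> (fst p) (snd p)"
      unfolding cell_solution_def by (simp add: case_prod_beta)
    then show "p = (H, f)"
      using cell_solution_unique[OF \<open>C1 G\<close> _ sol] by (simp add: prod_eq_iff)
  qed
qed

end
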